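(* Let $E$ be a Banach space, $T\colon\ell^1\to E$ a continuous linear operator with $T(e_n)\neq0$ for all $n$, and $p>1$. The following are equivalent: (a) $T$ admits a continuous linear extension $S\colon\ell^p\to E$ (i.e. $T$ is $\frac1p$-th power factorable with a continuous extension); (b) $\ell^p\subset\ell^1(m_T)$; (c) $\ell^1\subset\ell^{1/p}(m_T)\cap\ell^1(m_T)$; (d) there exists $C>0$ such that $\big\|\sum_{j\in F}x_jT(e_j)\big\|_E\le C\big(\sum_{j\in F}x_j^p\big)^{1/p}$ for all finite $F\subset\mathbb N$ and all $(x_j)_{j\in F}\subset[0,\infty)$.
   Context: $e_n=\chi_{\{n\}}$; $\ell^0$ is the space of all real sequences, $\mathcal P_F(\mathbb N)$ the $\delta$-ring of finite subsets of $\mathbb N$ (its local $\sigma$-algebra is $\mathcal P(\mathbb N)$). $m_T\colon\mathcal P_F(\mathbb N)\to E$, $m_T(A)=T(\chi_A)=\sum_{j\in A}T(e_j)$, is a vector measure; since $T(e_n)\ne0$, its only null set is $\emptyset$. For $x^*\in E^*$, $|x^*m_T|$ is the variation measure of $x^*\circ m_T$ on $\mathcal P(\mathbb N)$. $\ell^1(m_T)$ is the set of sequences $x\in\ell^0$ with $x\in L^1(|x^*m_T|)$ for every $x^*\in E^*$ and such that for each $A\subset\mathbb N$ there is $\int_Ax\,dm_T\in E$ with $x^*(\int_Ax\,dm_T)=\int_Ax\,dx^*m_T$ for all $x^*$; it is normed by $\sup_{x^*\in B_{E^*}}\int|x|\,d|x^*m_T|$. For $r\in(0,\infty)$, $\ell^r(m_T)=\{x\in\ell^0:|x|^r\in\ell^1(m_T)\}$.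 *)

theory Defs
  imports "HOL-Analysis.Analysis"
begin

definition unitvec :: "nat \<Rightarrow> nat \<Rightarrow> real" where
  "unitvec n = (\<lambda>k. if k = n then 1 else 0)"

definition ell :: "real \<Rightarrow> (nat \<Rightarrow> real) set" where
  "ell r = {x. summable (\<lambda>n. \<bar>x n\<bar> powr r)}"

definition ell_norm :: "real \<Rightarrow> (nat \<Rightarrow> real) \<Rightarrow> real" where
  "ell_norm r x = (\<Sum>n. \<bar>x n\<bar> powr r) powr (1 / r)"

definition cont_lin_op_on_ell :: "real \<Rightarrow> ((nat \<Rightarrow> real) \<Rightarrow> 'e::real_normed_vector) \<Rightarrow> bool" where
  "cont_lin_op_on_ell r T \<longleftrightarrow>
     (\<forall>x\<in>ell r. \<forall>y\<in>ell r. T (\<lambda>n. x n + y n) = T x + T y) \<and>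
     (\<forall>c. \<forall>x\<in>ell r. T (\<lambda>n. c * x n) = c *\<^sub>R T x) \<and>
     (\<exists>K. \<forall>x\<in>ell r. norm (T x) \<le> K * ell_norm r x)"

text \<open>ell^1(m_T): m_T(A) = sum over j in A of T(e_j); for x^* in E^*, the variation
  measure |x^* m_T| on P(N) is A |-> sum over j in A of |x^*(T e_j)|, and
  the integral of x over A w.r.t. x^* m_T is sum over j in A of x_j x^*(T e_j).\<close>
definition ell1_mT :: "((nat \<Rightarrow> real) \<Rightarrow> 'e::real_normed_vector) \<Rightarrow> (nat \<Rightarrow> real) \<Rightarrow> bool" where
  "ell1_mT T x \<longleftrightarrow>
     (\<forall>f :: 'e \<Rightarrow> real. bounded_linear f \<longrightarrow>
         summable (\<lambda>j. \<bar>x j\<bar> * \<bar>f (T (unitvec j))\<bar>)) \<and>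
     (\<forall>A :: nat set. \<exists>v :: 'e. \<forall>f :: 'e \<Rightarrow> real. bounded_linear f \<longrightarrow>
         f v = (\<Sum>j. if j \<in> A then x j * f (T (unitvec j)) else 0))"

definition ellr_mT :: "real \<Rightarrow> ((nat \<Rightarrow> real) \<Rightarrow> 'e::real_normed_vector) \<Rightarrow> (nat \<Rightarrow> real) \<Rightarrow> bool" where
  "ellr_mT r T x \<longleftrightarrow> ell1_mT T (\<lambda>j. \<bar>x j\<bar> powr r)"

end

theory Submission
  imports Defs
begin

(* (a) => (b): an extension S of T expands as S y = sum_j y_j T(e_j) for y in ell^p, and so do
   its restrictions to arbitrary A, which gives the vector integrals defining ell^1(m_T).
   (b) => (c) is the substitution y = |x|^(1/p), together with ell^1 in ell^p.
   (c) => (d) is a gliding hump: if (d) fails, there are nonnegative blocks x_k of ell^p-mass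
   2^(-k) with norm (sum_j x_k,j T(e_j)) > k; they have a common majorant y in ell^p, so by (c)
   every functional is bounded on the block sums, and the uniform boundedness principle
   (with Hahn-Banach norming functionals) contradicts their growth.
   (d) => (a): splitting into positive and negative parts, (d) holds with constant 2C for all
   finitely supported y; hence sum_j y_j T(e_j) converges for y in ell^p and defines S. *)

section \<open>Sublinear functionals and norming functionals\<close>

definition sublinear :: "('a::real_vector \<Rightarrow> real) \<Rightarrow> bool" where
  "sublinear q \<longleftrightarrow> (\<forall>x y. q (x + y) \<le> q x + q y) \<and> (\<forall>t x. t \<ge> 0 \<longrightarrow> q (t *\<^sub>R x) \<le> t * q x)"

lemma sublinear_add: "sublinear q \<Longrightarrow> q (x + y) \<le> q x + q y"
  unfolding sublinear_def by blast

lemma sublinear_zero: assumes "sublinear q" shows "q 0 = 0"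
proof -
  have "q (0 *\<^sub>R 0) \<le> 0 * q 0" using assms unfolding sublinear_def by blast
  moreover have "q (0 + 0) \<le> q 0 + q 0" by (rule sublinear_add[OF assms])
  ultimately show ?thesis by simp
qed

lemma sublinear_scaleR_nonneg:
  assumes q: "sublinear q" and t: "t \<ge> 0"
  shows "q (t *\<^sub>R x) = t * q x"
proof (cases "t = 0")
  case True
  then show ?thesis using sublinear_zero[OF q] by simp
next
  case False
  then have "t > 0" using t by simp
  have le: "q (s *\<^sub>R y) \<le> s * q y" if "s \<ge> 0" for s y
    using q that unfolding sublinear_def by blast
  have "q x \<le> inverse t * q (t *\<^sub>R x)"
    using le[of "inverse t" "t *\<^sub>R x"] \<open>t > 0\<close> by simp
  then have "t * q x \<le> q (t *\<^sub>R x)" using \<open>t > 0\<close> by (simp add: field_simps)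
  then show ?thesis using le[OF t, of x] by simp
qed

lemma sublinear_minus: assumes "sublinear q" shows "- q (- x) \<le> q x"
  using sublinear_add[OF assms, of x "- x"] sublinear_zero[OF assms] by simp

text \<open>Shifting q in direction x gives a sublinear functional below q that is at most - q x
  at - x; hence a minimal sublinear functional is odd, and thus linear.\<close>
definition sublinear_shift :: "('a::real_vector \<Rightarrow> real) \<Rightarrow> 'a \<Rightarrow> 'a \<Rightarrow> real" where
  "sublinear_shift q x y = (INF t\<in>{0..}. q (y + t *\<^sub>R x) - t * q x)"

lemma sublinear_shift_le:
  assumes q: "sublinear q" and t: "t \<ge> 0"
  shows "sublinear_shift q x y \<le> q (y + t *\<^sub>R x) - t * q x"
proof -
  have "- q (- y) \<le> q (y + s *\<^sub>R x) - s * q x" if "s \<ge> 0" for s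
    using sublinear_add[OF q, of "y + s *\<^sub>R x" "- y"] sublinear_scaleR_nonneg[OF q that, of x]
    by simp
  then have "bdd_below ((\<lambda>s. q (y + s *\<^sub>R x) - s * q x) ` {0..})"
    by (intro bdd_belowI2) auto
  then show ?thesis unfolding sublinear_shift_def using t by (intro cINF_lower) auto
qed

lemma sublinear_shift_greatest:
  assumes "\<And>t. t \<ge> 0 \<Longrightarrow> c \<le> q (y + t *\<^sub>R x) - t * q x"
  shows "c \<le> sublinear_shift q x y"
  unfolding sublinear_shift_def using assms by (intro cINF_greatest) auto

lemma sublinear_shift_le_self: "sublinear q \<Longrightarrow> sublinear_shift q x y \<le> q y"
  using sublinear_shift_le[of q 0] by simp

lemma sublinear_shift_minus: "sublinear q \<Longrightarrow> sublinear_shift q x (- x) \<le> - q x"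
  using sublinear_shift_le[of q 1 x "- x"] sublinear_zero[of q] by simp

lemma sublinear_shift_add:
  assumes q: "sublinear q"
  shows "sublinear_shift q x (y1 + y2) \<le> sublinear_shift q x y1 + sublinear_shift q x y2"
proof -
  have "sublinear_shift q x (y1 + y2) - (q (y2 + t2 *\<^sub>R x) - t2 * q x) \<le> sublinear_shift q x y1"
    if t2: "t2 \<ge> 0" for t2
  proof (rule sublinear_shift_greatest)
    fix t1 :: real assume t1: "t1 \<ge> 0"
    have "sublinear_shift q x (y1 + y2) \<le> q (y1 + y2 + (t1 + t2) *\<^sub>R x) - (t1 + t2) * q x"
      using sublinear_shift_le[OF q] t1 t2 by simp
    also have "q (y1 + y2 + (t1 + t2) *\<^sub>R x) = q ((y1 + t1 *\<^sub>R x) + (y2 + t2 *\<^sub>R x))"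
      by (simp add: algebra_simps)
    also have "\<dots> \<le> q (y1 + t1 *\<^sub>R x) + q (y2 + t2 *\<^sub>R x)" by (rule sublinear_add[OF q])
    finally show "sublinear_shift q x (y1 + y2) - (q (y2 + t2 *\<^sub>R x) - t2 * q x)
        \<le> q (y1 + t1 *\<^sub>R x) - t1 * q x" by (simp add: algebra_simps)
  qed
  then have "sublinear_shift q x (y1 + y2) - sublinear_shift q x y1 \<le> sublinear_shift q x y2"
    by (intro sublinear_shift_greatest) (simp add: algebra_simps)
  then show ?thesis by simp
qed

lemma sublinear_shift_scaleR:
  assumes q: "sublinear q" and t: "t \<ge> 0"
  shows "sublinear_shift q x (t *\<^sub>R y) \<le> t * sublinear_shift q x y"
proof (cases "t = 0")
  case True
  then show ?thesis using sublinear_shift_le_self[OF q, of x 0] sublinear_zero[OF q] by simp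
next
  case False
  then have "t > 0" using t by simp
  have "sublinear_shift q x (t *\<^sub>R y) / t \<le> sublinear_shift q x y"
  proof (rule sublinear_shift_greatest)
    fix s :: real assume s: "s \<ge> 0"
    have "sublinear_shift q x (t *\<^sub>R y) \<le> q (t *\<^sub>R y + (t * s) *\<^sub>R x) - (t * s) * q x"
      using sublinear_shift_le[OF q] s t by simp
    also have "q (t *\<^sub>R y + (t * s) *\<^sub>R x) = t * q (y + s *\<^sub>R x)"
      using sublinear_scaleR_nonneg[OF q t, of "y + s *\<^sub>R x"] by (simp add: algebra_simps)
    finally show "sublinear_shift q x (t *\<^sub>R y) / t \<le> q (y + s *\<^sub>R x) - s * q x"
      using \<open>t > 0\<close> by (simp add: field_simps)
  qed
  then show ?thesis using \<open>t > 0\<close> by (simp add: field_simps)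
qed

lemma sublinear_sublinear_shift:
  assumes "sublinear q"
  shows "sublinear (sublinear_shift q x)"
  using sublinear_shift_add[OF assms] sublinear_shift_scaleR[OF assms] unfolding sublinear_def by blast

lemma minimal_sublinear_linear:
  assumes q: "sublinear q" and minimal: "\<And>r. sublinear r \<Longrightarrow> r \<le> q \<Longrightarrow> r = q"
  shows "linear q"
proof -
  have minus: "q (- x) = - q x" for x
  proof -
    have "sublinear_shift q x = q"
      using minimal[OF sublinear_sublinear_shift[OF q]] sublinear_shift_le_self[OF q]
      by (simp add: le_fun_def)
    then show ?thesis
      using sublinear_shift_minus[OF q, of x] sublinear_minus[OF q, of x] by simp
  qed
  show ?thesis
  proof (rule linearI)
    fix x y
    show "q (x + y) = q x + q y"
      using sublinear_add[OF q, of x y] sublinear_add[OF q, of "x + y" "- y"] minus[of y] by simp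
  next
    fix c x
    show "q (c *\<^sub>R x) = c *\<^sub>R q x"
      using sublinear_scaleR_nonneg[OF q, of c x] sublinear_scaleR_nonneg[OF q, of "- c" x]
        minus[of "(- c) *\<^sub>R x"]
      by (cases "c \<ge> 0") auto
  qed
qed

lemma INF_sublinear_below_le:
  assumes sub: "\<And>a. a \<in> C \<Longrightarrow> sublinear a \<and> a \<le> p" and a: "a \<in> C"
  shows "(INF a\<in>C. a x) \<le> a x"
proof -
  have "- p (- x) \<le> b x" if "b \<in> C" for b
  proof -
    have "b (- x) \<le> p (- x)" using sub[OF that] by (simp add: le_fun_def)
    then show ?thesis using sublinear_minus[of b x] sub[OF that] by linarith
  qed
  then show ?thesis using a by (intro cINF_lower bdd_belowI2)
qed

lemma INF_sublinear_chain_add: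
  assumes ne: "C \<noteq> {}" and sub: "\<And>a. a \<in> C \<Longrightarrow> sublinear a \<and> a \<le> p"
    and chain: "\<And>a b. a \<in> C \<Longrightarrow> b \<in> C \<Longrightarrow> a \<le> b \<or> b \<le> a"
  shows "(INF a\<in>C. a (x + y)) \<le> (INF a\<in>C. a x) + (INF a\<in>C. a y)"
proof -
  have lower: "(INF a\<in>C. a z) \<le> a z" if "a \<in> C" for a z
    by (rule INF_sublinear_below_le[of C p]) (use sub that in auto)
  have "(INF a\<in>C. a (x + y)) - a2 y \<le> (INF a\<in>C. a x)" if a2: "a2 \<in> C" for a2
  proof (rule cINF_greatest[OF ne])
    fix a1 assume a1: "a1 \<in> C"
    \<comment> \<open>the smaller of a1 and a2 bounds both terms\<close>
    have "(INF a\<in>C. a (x + y)) \<le> a (x + y)" "a (x + y) \<le> a x + a y" if "a \<in> C" for a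
      using lower[OF that] sublinear_add sub[OF that] by blast+
    moreover have "a1 y \<le> a2 y \<or> a2 x \<le> a1 x"
      using chain[OF a1 a2] by (auto simp: le_fun_def)
    ultimately show "(INF a\<in>C. a (x + y)) - a2 y \<le> a1 x"
      using a1 a2 by fastforce
  qed
  then have "(INF a\<in>C. a (x + y)) - (INF a\<in>C. a x) \<le> (INF a\<in>C. a y)"
    by (intro cINF_greatest[OF ne]) (smt (verit))
  then show ?thesis by simp
qed

lemma INF_sublinear_scaleR:
  assumes ne: "C \<noteq> {}" and sub: "\<And>a. a \<in> C \<Longrightarrow> sublinear a \<and> a \<le> p" and t: "t \<ge> 0"
  shows "(INF a\<in>C. a (t *\<^sub>R x)) \<le> t * (INF a\<in>C. a x)"
proof (cases "t = 0")
  case True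
  obtain a0 where a0: "a0 \<in> C" using ne by blast
  then show ?thesis
    using True INF_sublinear_below_le[of C p a0 0] sublinear_zero[of a0] sub by simp
next
  case False
  then have "t > 0" using t by simp
  have "(INF a\<in>C. a (t *\<^sub>R x)) / t \<le> (INF a\<in>C. a x)"
  proof (rule cINF_greatest[OF ne])
    fix a assume "a \<in> C"
    then have "(INF a\<in>C. a (t *\<^sub>R x)) \<le> t * a x"
      using INF_sublinear_below_le[of C p a "t *\<^sub>R x"] sublinear_scaleR_nonneg[OF _ t, of a x] sub
      by simp
    then show "(INF a\<in>C. a (t *\<^sub>R x)) / t \<le> a x" using \<open>t > 0\<close> by (simp add: field_simps)
  qed
  then show ?thesis using \<open>t > 0\<close> by (simp add: field_simps)
qed

lemma sublinear_INF_chain: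
  assumes ne: "C \<noteq> {}" and sub: "\<And>a. a \<in> C \<Longrightarrow> sublinear a \<and> a \<le> p"
    and chain: "\<And>a b. a \<in> C \<Longrightarrow> b \<in> C \<Longrightarrow> a \<le> b \<or> b \<le> a"
  shows "sublinear (\<lambda>x. INF a\<in>C. a x)"
  unfolding sublinear_def
  using INF_sublinear_chain_add[OF ne sub chain] INF_sublinear_scaleR[OF ne sub] by blast

lemma minimal_sublinear_below:
  fixes p :: "'a::real_vector \<Rightarrow> real"
  assumes "sublinear p"
  shows "\<exists>m. sublinear m \<and> m \<le> p \<and> (\<forall>r. sublinear r \<longrightarrow> r \<le> m \<longrightarrow> r = m)"
proof -
  define A where "A = {q. sublinear q \<and> q \<le> p}"
  have po: "partial_order_on A (relation_of (\<ge>) A)"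
    unfolding partial_order_on_def preorder_on_def refl_on_def trans_def antisym_def relation_of_def
    by auto
  have "\<exists>u\<in>A. \<forall>a\<in>C. u \<le> a" if C: "C \<in> Chains (relation_of (\<ge>) A)" for C
  proof (cases "C = {}")
    case True
    then show ?thesis using assms unfolding A_def by auto
  next
    case False
    have sub: "\<And>a. a \<in> C \<Longrightarrow> sublinear a \<and> a \<le> p"
      and chain: "\<And>a b. a \<in> C \<Longrightarrow> b \<in> C \<Longrightarrow> a \<le> b \<or> b \<le> a"
      using C unfolding Chains_def relation_of_def A_def by auto
    have below: "(\<lambda>x. INF a\<in>C. a x) \<le> a" if "a \<in> C" for a
      using INF_sublinear_below_le[of C p a] sub that by (simp add: le_fun_def)
    moreover obtain a0 where "a0 \<in> C" using False by blast
    ultimately have "(\<lambda>x. INF a\<in>C. a x) \<le> p" using sub by (blast intro: order_trans)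
    then show ?thesis
      using sublinear_INF_chain[OF False sub chain] below unfolding A_def by blast
  qed
  then obtain m where "m \<in> A" "\<forall>a\<in>A. a \<le> m \<longrightarrow> a = m"
    using predicate_Zorn[OF po] by blast
  then show ?thesis unfolding A_def by (blast intro: order_trans)
qed

lemma norming_functional:
  fixes u :: "'a::real_normed_vector"
  obtains f where "bounded_linear f" "f u = norm u" "\<And>w. \<bar>f w\<bar> \<le> norm w"
proof -
  have norm: "sublinear (norm :: 'a \<Rightarrow> real)"
    unfolding sublinear_def by (auto intro: norm_triangle_ineq)
  obtain m where m: "sublinear m" "m \<le> sublinear_shift norm u"
    and minimal: "\<And>r. sublinear r \<Longrightarrow> r \<le> m \<Longrightarrow> r = m"
    using minimal_sublinear_below[OF sublinear_sublinear_shift[OF norm]] by blast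
  have lin: "linear m" by (rule minimal_sublinear_linear[OF m(1) minimal])
  have le: "m w \<le> norm w" for w
    using m(2) sublinear_shift_le_self[OF norm, of u w] by (auto simp: le_fun_def intro: order_trans)
  have abs: "\<bar>m w\<bar> \<le> norm w" for w
    using le[of w] le[of "- w"] linear_neg[OF lin, of w] by auto
  have "m (- u) \<le> - norm u"
    using m(2) sublinear_shift_minus[OF norm, of u] by (auto simp: le_fun_def intro: order_trans)
  then have "m u = norm u" using le[of u] linear_neg[OF lin, of u] by simp
  moreover have "bounded_linear m"
    using lin abs by (intro bounded_linear_intro[where K=1] linear_add linear_scale) auto
  ultimately show ?thesis using abs that by blast
qed

section \<open>Weakly bounded sequences are bounded\<close>

lemma Baire_closed_cover_ball:
  fixes S :: "nat \<Rightarrow> 'a::complete_space set"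
  assumes closed: "\<And>n. closed (S n)" and cover: "(\<Union>n. S n) = UNIV"
  obtains n x r where "r > 0" "ball x r \<subseteq> S n"
proof -
  have "\<exists>n. interior (S n) \<noteq> {}"
  proof (rule ccontr)
    assume "\<not> ?thesis"
    then have "euclidean interior_of (\<Union>(range S)) = {}"
      using closed by (intro Baire_category_alt)
        (auto simp: completely_metrizable_space_euclidean closed_closedin[symmetric])
    then show False using cover by simp
  qed
  then show ?thesis using that by (meson ex_in_conv open_contains_ball open_interior interior_subset
      subset_trans)
qed

lemma norm_le_of_ball_bounded_at:
  fixes v :: "'a::real_normed_vector"
  assumes r: "r > 0" and ball: "ball g0 r \<subseteq> {g :: 'a \<Rightarrow>\<^sub>L real. \<bar>g v\<bar> \<le> c}"
  shows "norm v \<le> 4 * c / r"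
proof -
  obtain h where h: "bounded_linear h" "h v = norm v" "\<And>w. \<bar>h w\<bar> \<le> norm w"
    using norming_functional by blast
  define g where "g = g0 + (r / 2) *\<^sub>R Blinfun h"
  have Blinfun_h: "blinfun_apply (Blinfun h) = h"
    using h(1) by (rule bounded_linear_Blinfun_apply)
  have "norm (Blinfun h) \<le> 1"
    using h(3) by (intro norm_blinfun_bound) (auto simp: Blinfun_h)
  then have "dist g0 g < r" unfolding g_def dist_norm using r by simp
  then have "g0 \<in> ball g0 r" "g \<in> ball g0 r" using r by auto
  then have "g0 \<in> {g. \<bar>blinfun_apply g v\<bar> \<le> c}" "g \<in> {g. \<bar>blinfun_apply g v\<bar> \<le> c}"
    using ball by blast+
  then have "\<bar>g0 v\<bar> \<le> c" "\<bar>g0 v + (r / 2) * h v\<bar> \<le> c"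
    unfolding g_def by (auto simp: blinfun.add_left blinfun.scaleR_left Blinfun_h)
  then have "(r / 2) * norm v \<le> 2 * c" using h(2) by (smt (verit))
  then show ?thesis using r by (simp add: field_simps)
qed

lemma weakly_bounded_imp_bounded:
  fixes u :: "nat \<Rightarrow> 'a::real_normed_vector"
  assumes weakly_bounded: "\<And>f :: 'a \<Rightarrow> real. bounded_linear f \<Longrightarrow> \<exists>c. \<forall>k. \<bar>f (u k)\<bar> \<le> c"
  shows "\<exists>M. \<forall>k. norm (u k) \<le> M"
proof -
  define S where "S n = {g :: 'a \<Rightarrow>\<^sub>L real. \<forall>k. \<bar>g (u k)\<bar> \<le> real n}" for n
  have "closed (S n)" for n
  proof -
    have "S n = (\<Inter>k. {g. \<bar>blinfun_apply g (u k)\<bar> \<le> real n})" unfolding S_def by auto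
    then show ?thesis by (auto intro!: closed_Collect_le continuous_intros)
  qed
  moreover have "g \<in> (\<Union>n. S n)" for g
  proof -
    obtain c where "\<forall>k. \<bar>g (u k)\<bar> \<le> c"
      using weakly_bounded[OF blinfun.bounded_linear_right] by blast
    moreover obtain n :: nat where "c \<le> real n" using real_arch_simple by blast
    ultimately have "\<forall>k. \<bar>g (u k)\<bar> \<le> real n" by (meson order_trans)
    then show ?thesis unfolding S_def by blast
  qed
  then have "(\<Union>n. S n) = UNIV" by blast
  ultimately obtain n g0 r where r: "r > 0" and ball: "ball g0 r \<subseteq> S n"
    using Baire_closed_cover_ball by metis
  have "norm (u k) \<le> 4 * real n / r" for k
    using ball unfolding S_def by (intro norm_le_of_ball_bounded_at[OF r]) auto
  then show ?thesis by blast
qed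

lemma ell_finite_support:
  assumes "finite F" "\<And>j. j \<notin> F \<Longrightarrow> x j = 0"
  shows "x \<in> ell r"
proof -
  have "(\<lambda>j. \<bar>x j\<bar> powr r) sums (\<Sum>j\<in>F. \<bar>x j\<bar> powr r)"
    by (rule sums_finite) (use assms in auto)
  then show ?thesis unfolding ell_def by (auto simp: sums_summable)
qed

lemma unitvec_in_ell: "unitvec n \<in> ell r"
  by (rule ell_finite_support[of "{n}"]) (auto simp: unitvec_def)

lemma ell_dominated:
  assumes "y \<in> ell r" "r \<ge> 0" "\<And>j. \<bar>x j\<bar> \<le> \<bar>y j\<bar>"
  shows "x \<in> ell r"
proof -
  have "summable (\<lambda>j. \<bar>y j\<bar> powr r)" using assms(1) unfolding ell_def by simp
  moreover have "norm (\<bar>x j\<bar> powr r) \<le> \<bar>y j\<bar> powr r" for j using assms by (auto intro: powr_mono2)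
  ultimately show ?thesis
    unfolding ell_def mem_Collect_eq by (rule summable_comparison_test'[where N=0])
qed

lemma ell_1_subset_ell:
  assumes "p \<ge> 1"
  shows "ell 1 \<subseteq> ell p"
proof
  fix x assume "x \<in> ell 1"
  then have summable: "summable (\<lambda>j. \<bar>x j\<bar>)" unfolding ell_def by simp
  then have "(\<lambda>j. \<bar>x j\<bar>) \<longlonglongrightarrow> 0" by (rule summable_LIMSEQ_zero)
  then have "\<forall>\<^sub>F j in sequentially. \<bar>x j\<bar> < 1" by (rule order_tendstoD) simp
  then have "\<forall>\<^sub>F j in sequentially. norm (\<bar>x j\<bar> powr p) \<le> \<bar>x j\<bar>"
  proof (rule eventually_mono)
    fix j assume "\<bar>x j\<bar> < 1"
    then have "\<bar>x j\<bar> powr p \<le> \<bar>x j\<bar> powr 1" using assms by (intro powr_mono') auto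
    then show "norm (\<bar>x j\<bar> powr p) \<le> \<bar>x j\<bar>" by simp
  qed
  then show "x \<in> ell p"
    unfolding ell_def using summable by (auto intro: summable_comparison_test_ev)
qed

lemma cont_lin_op_add:
  "cont_lin_op_on_ell r R \<Longrightarrow> x \<in> ell r \<Longrightarrow> y \<in> ell r \<Longrightarrow> R (\<lambda>n. x n + y n) = R x + R y"
  unfolding cont_lin_op_on_ell_def by blast

lemma cont_lin_op_scale:
  "cont_lin_op_on_ell r R \<Longrightarrow> x \<in> ell r \<Longrightarrow> R (\<lambda>n. c * x n) = c *\<^sub>R R x"
  unfolding cont_lin_op_on_ell_def by blast

lemma cont_lin_op_bound:
  assumes "cont_lin_op_on_ell r R"
  obtains K where "\<And>x. x \<in> ell r \<Longrightarrow> norm (R x) \<le> K * ell_norm r x"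
  using assms unfolding cont_lin_op_on_ell_def by blast

lemma cont_lin_op_finite_support:
  assumes R: "cont_lin_op_on_ell r R" and F: "finite F"
  shows "R (\<lambda>j. if j \<in> F then y j else 0) = (\<Sum>i\<in>F. y i *\<^sub>R R (unitvec i))"
  using F
proof (induction F rule: finite_induct)
  case empty
  have "R (\<lambda>j. 0 * 0) = 0 *\<^sub>R R (\<lambda>j. 0)"
    by (rule cont_lin_op_scale[OF R]) (rule ell_finite_support[of "{}"], auto)
  then show ?case by simp
next
  case (insert i F)
  have "(\<lambda>j. if j \<in> insert i F then y j else 0)
      = (\<lambda>j. y i * unitvec i j + (if j \<in> F then y j else 0))"
    using insert.hyps by (auto simp: unitvec_def)
  moreover have "(\<lambda>j. y i * unitvec i j) \<in> ell r"
    by (rule ell_finite_support[of "{i}"]) (auto simp: unitvec_def)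
  moreover have "(\<lambda>j. if j \<in> F then y j else 0) \<in> ell r"
    by (rule ell_finite_support[of F]) (auto simp: insert.hyps)
  ultimately show ?case
    using insert cont_lin_op_add[OF R] cont_lin_op_scale[OF R unitvec_in_ell] by simp
qed

lemma ell_norm_tail_tendsto_0:
  assumes "y \<in> ell r" "r > 0"
  shows "(\<lambda>n. ell_norm r (\<lambda>j. if j < n then 0 else y j)) \<longlonglongrightarrow> 0"
proof -
  define g where "g j = \<bar>y j\<bar> powr r" for j
  have g: "summable g" using assms unfolding ell_def g_def by simp
  have tail: "(\<Sum>j. \<bar>if j < n then 0 else y j\<bar> powr r) = suminf g - (\<Sum>j<n. g j)" for n
  proof -
    have "(\<lambda>j. g j - (if j \<in> {..<n} then g j else 0)) sums (suminf g - (\<Sum>j<n. g j))"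
      by (intro sums_diff summable_sums g sums_If_finite_set) simp
    moreover have "(\<lambda>j. g j - (if j \<in> {..<n} then g j else 0))
        = (\<lambda>j. \<bar>if j < n then 0 else y j\<bar> powr r)"
      by (auto simp: g_def)
    ultimately show ?thesis by (simp add: sums_iff)
  qed
  have "(\<lambda>n. suminf g - (\<Sum>j<n. g j)) \<longlonglongrightarrow> 0"
    using tendsto_diff[OF tendsto_const summable_LIMSEQ[OF g], of "suminf g"] by simp
  moreover have "suminf g - (\<Sum>j<n. g j) \<ge> 0" for n
    using sum_le_suminf[OF g, of "{..<n}"] by (auto simp: g_def)
  ultimately have "(\<lambda>n. (suminf g - (\<Sum>j<n. g j)) powr (1 / r)) \<longlonglongrightarrow> 0"
    using assms(2) by (auto intro!: tendsto_zero_powrI[OF _ tendsto_const])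
  then show ?thesis unfolding ell_norm_def tail .
qed

lemma cont_lin_op_sums:
  assumes R: "cont_lin_op_on_ell r R" and r: "r > 0" and y: "y \<in> ell r"
  shows "(\<lambda>j. y j *\<^sub>R R (unitvec j)) sums R y"
proof -
  obtain K where K: "\<And>x. x \<in> ell r \<Longrightarrow> norm (R x) \<le> K * ell_norm r x"
    using cont_lin_op_bound[OF R] by blast
  define head where "head n = (\<lambda>j. if j \<in> {..<n} then y j else 0)" for n
  define tail where "tail n = (\<lambda>j. if j < n then 0 else y j)" for n
  have head: "head n \<in> ell r" and tail: "tail n \<in> ell r" for n
    using r by (auto intro!: ell_dominated[OF y] simp: head_def tail_def)
  have split: "R y = R (head n) + R (tail n)" for n
  proof -
    have "y = (\<lambda>j. head n j + tail n j)" by (auto simp: head_def tail_def)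
    then show ?thesis using cont_lin_op_add[OF R head tail] by simp
  qed
  have "R (head n) = (\<Sum>i<n. y i *\<^sub>R R (unitvec i))" for n
    unfolding head_def by (rule cont_lin_op_finite_support[OF R]) simp
  then have "(\<Sum>i<n. y i *\<^sub>R R (unitvec i)) - R y = - R (tail n)" for n
    using split[of n] by simp
  then have bound: "norm ((\<Sum>i<n. y i *\<^sub>R R (unitvec i)) - R y) \<le> K * ell_norm r (tail n)" for n
    using K[OF tail] by simp
  have "(\<lambda>n. K * ell_norm r (tail n)) \<longlonglongrightarrow> 0"
    unfolding tail_def by (intro tendsto_mult_right_zero ell_norm_tail_tendsto_0 y r)
  then have "(\<lambda>n. (\<Sum>i<n. y i *\<^sub>R R (unitvec i)) - R y) \<longlonglongrightarrow> 0"
    by (rule Lim_null_comparison[OF always_eventually, rotated]) (use bound in blast)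
  then show ?thesis unfolding sums_def by (rule LIM_zero_cancel)
qed

section \<open>The estimate on nonnegative finite sums\<close>

definition nonneg_sums_bounded :: "real \<Rightarrow> real \<Rightarrow> (nat \<Rightarrow> 'a::real_normed_vector) \<Rightarrow> bool" where
  "nonneg_sums_bounded p C a \<longleftrightarrow> (\<forall>F x. finite F \<longrightarrow> (\<forall>j\<in>F. x j \<ge> 0) \<longrightarrow>
     norm (\<Sum>j\<in>F. x j *\<^sub>R a j) \<le> C * (\<Sum>j\<in>F. x j powr p) powr (1 / p))"

lemma nonneg_sums_bounded_signed:
  assumes bounded: "nonneg_sums_bounded p C a" and C: "C \<ge> 0" and p: "p > 0" and F: "finite F"
  shows "norm (\<Sum>j\<in>F. x j *\<^sub>R a j) \<le> 2 * C * (\<Sum>j\<in>F. \<bar>x j\<bar> powr p) powr (1 / p)"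
proof -
  define s where "s = (\<Sum>j\<in>F. \<bar>x j\<bar> powr p) powr (1 / p)"
  have part: "norm (\<Sum>j\<in>{j\<in>F. P j}. \<bar>x j\<bar> *\<^sub>R a j) \<le> C * s" for P
  proof -
    have "norm (\<Sum>j\<in>{j\<in>F. P j}. \<bar>x j\<bar> *\<^sub>R a j)
        \<le> C * (\<Sum>j\<in>{j\<in>F. P j}. \<bar>x j\<bar> powr p) powr (1 / p)"
      using bounded F unfolding nonneg_sums_bounded_def by auto
    also have "\<dots> \<le> C * s"
      unfolding s_def using C p F by (intro mult_left_mono powr_mono2 sum_mono2) (auto intro: sum_nonneg)
    finally show ?thesis .
  qed
  have "(\<Sum>j\<in>F. x j *\<^sub>R a j) = (\<Sum>j\<in>F. (if x j \<ge> 0 then \<bar>x j\<bar> *\<^sub>R a j else 0))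
      - (\<Sum>j\<in>F. (if x j < 0 then \<bar>x j\<bar> *\<^sub>R a j else 0))"
    unfolding sum_subtractf[symmetric] by (rule sum.cong) auto
  also have "\<dots> = (\<Sum>j\<in>{j\<in>F. x j \<ge> 0}. \<bar>x j\<bar> *\<^sub>R a j) - (\<Sum>j\<in>{j\<in>F. x j < 0}. \<bar>x j\<bar> *\<^sub>R a j)"
    using F by (simp only: sum.inter_filter)
  finally have "norm (\<Sum>j\<in>F. x j *\<^sub>R a j)
      \<le> norm (\<Sum>j\<in>{j\<in>F. x j \<ge> 0}. \<bar>x j\<bar> *\<^sub>R a j) + norm (\<Sum>j\<in>{j\<in>F. x j < 0}. \<bar>x j\<bar> *\<^sub>R a j)"
    by (simp only: norm_triangle_ineq4)
  also have "\<dots> \<le> C * s + C * s" by (intro add_mono part)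
  finally show ?thesis unfolding s_def by simp
qed

lemma finite_sum_powr_le_ell_norm:
  assumes "y \<in> ell p" "p > 0" "finite F"
  shows "(\<Sum>j\<in>F. \<bar>y j\<bar> powr p) powr (1 / p) \<le> ell_norm p y"
  unfolding ell_norm_def using assms
  by (intro powr_mono2 sum_le_suminf) (auto simp: ell_def intro: sum_nonneg)

lemma nonneg_sums_bounded_summable:
  fixes a :: "nat \<Rightarrow> 'a::banach"
  assumes bounded: "nonneg_sums_bounded p C a" and C: "C \<ge> 0" and p: "p > 0" and y: "y \<in> ell p"
  shows "summable (\<lambda>j. y j *\<^sub>R a j)"
  unfolding summable_Cauchy
proof (intro allI impI)
  fix e :: real assume "e > 0"
  define tail where "tail m = (\<lambda>j. if j < m then 0 else y j)" for m
  have "(\<lambda>m. 2 * C * ell_norm p (tail m)) \<longlonglongrightarrow> 0"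
    unfolding tail_def by (intro tendsto_mult_right_zero ell_norm_tail_tendsto_0 y p)
  from order_tendstoD(2)[OF this \<open>e > 0\<close>]
  obtain N where N: "\<forall>m\<ge>N. 2 * C * ell_norm p (tail m) < e"
    unfolding eventually_sequentially by blast
  have "norm (\<Sum>j\<in>{m..<n}. y j *\<^sub>R a j) \<le> 2 * C * ell_norm p (tail m)" for m n
  proof -
    have "tail m \<in> ell p" using p by (auto intro: ell_dominated[OF y] simp: tail_def)
    have "norm (\<Sum>j\<in>{m..<n}. y j *\<^sub>R a j) \<le> 2 * C * (\<Sum>j\<in>{m..<n}. \<bar>y j\<bar> powr p) powr (1 / p)"
      by (rule nonneg_sums_bounded_signed[OF bounded C p]) simp
    also have "(\<Sum>j\<in>{m..<n}. \<bar>y j\<bar> powr p) = (\<Sum>j\<in>{m..<n}. \<bar>tail m j\<bar> powr p)"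
      by (auto simp: tail_def)
    also have "2 * C * \<dots> powr (1 / p) \<le> 2 * C * ell_norm p (tail m)"
      using finite_sum_powr_le_ell_norm[OF \<open>tail m \<in> ell p\<close> p] C by (simp add: mult_left_mono)
    finally show ?thesis .
  qed
  then show "\<exists>N. \<forall>m\<ge>N. \<forall>n. norm (\<Sum>j\<in>{m..<n}. y j *\<^sub>R a j) < e"
    using N by (meson order_le_less_trans)
qed

lemma nonneg_sums_bounded_suminf_le:
  fixes a :: "nat \<Rightarrow> 'a::banach"
  assumes bounded: "nonneg_sums_bounded p C a" and C: "C \<ge> 0" and p: "p > 0" and y: "y \<in> ell p"
  shows "norm (\<Sum>j. y j *\<^sub>R a j) \<le> 2 * C * ell_norm p y"
proof -
  have "norm (\<Sum>j<n. y j *\<^sub>R a j) \<le> 2 * C * ell_norm p y" for n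
  proof -
    have "norm (\<Sum>j<n. y j *\<^sub>R a j) \<le> 2 * C * (\<Sum>j<n. \<bar>y j\<bar> powr p) powr (1 / p)"
      by (rule nonneg_sums_bounded_signed[OF bounded C p]) simp
    also have "\<dots> \<le> 2 * C * ell_norm p y"
      using finite_sum_powr_le_ell_norm[OF y p] C by (simp add: mult_left_mono)
    finally show ?thesis .
  qed
  moreover have "(\<lambda>n. norm (\<Sum>j<n. y j *\<^sub>R a j)) \<longlonglongrightarrow> norm (\<Sum>j. y j *\<^sub>R a j)"
    by (intro tendsto_norm summable_LIMSEQ nonneg_sums_bounded_summable[OF assms])
  ultimately show ?thesis by (blast intro: LIMSEQ_le_const2)
qed

lemma extension_of_nonneg_sums_bounded:
  fixes T :: "(nat \<Rightarrow> real) \<Rightarrow> 'a::banach"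
  assumes T: "cont_lin_op_on_ell 1 T" and p: "p > 0" and C: "C \<ge> 0"
    and bounded: "nonneg_sums_bounded p C (\<lambda>j. T (unitvec j))"
  shows "\<exists>S. cont_lin_op_on_ell p S \<and> (\<forall>x\<in>ell 1. S x = T x)"
proof (intro exI conjI ballI)
  define S where "S y = (\<Sum>j. y j *\<^sub>R T (unitvec j))" for y
  note summable = nonneg_sums_bounded_summable[OF bounded C p]
    and suminf_le = nonneg_sums_bounded_suminf_le[OF bounded C p]
  show "cont_lin_op_on_ell p S"
    unfolding cont_lin_op_on_ell_def
  proof (intro conjI ballI allI)
    fix x y assume "x \<in> ell p" "y \<in> ell p"
    then show "S (\<lambda>n. x n + y n) = S x + S y"
      unfolding S_def using suminf_add[OF summable summable] by (simp add: scaleR_add_left)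
  next
    fix c x assume "x \<in> ell p"
    then show "S (\<lambda>n. c * x n) = c *\<^sub>R S x"
      unfolding S_def using suminf_scaleR_right[OF summable] by simp
  next
    show "\<exists>K. \<forall>x\<in>ell p. norm (S x) \<le> K * ell_norm p x"
      unfolding S_def using suminf_le by blast
  qed
  show "S x = T x" if "x \<in> ell 1" for x
    unfolding S_def using cont_lin_op_sums[OF T _ that] by (simp add: sums_iff)
qed

section \<open>Extensions and the space ell^1(m_T)\<close>

lemma extension_restriction_sums:
  fixes S T :: "(nat \<Rightarrow> real) \<Rightarrow> 'a::real_normed_vector"
  assumes S: "cont_lin_op_on_ell p S" and p: "p > 0" and ext: "\<forall>x\<in>ell 1. S x = T x"
    and y: "y \<in> ell p" and f: "bounded_linear f"
  shows "(\<lambda>j. if j \<in> A then y j * f (T (unitvec j)) else 0)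
    sums f (S (\<lambda>j. if j \<in> A then y j else 0))"
proof -
  have "(\<lambda>j. if j \<in> A then y j else 0) \<in> ell p"
    by (rule ell_dominated[OF y]) (use p in auto)
  then have "(\<lambda>j. f ((if j \<in> A then y j else 0) *\<^sub>R S (unitvec j)))
      sums f (S (\<lambda>j. if j \<in> A then y j else 0))"
    by (intro bounded_linear.sums[OF f] cont_lin_op_sums[OF S p])
  moreover have "S (unitvec j) = T (unitvec j)" for j
    using ext unitvec_in_ell by blast
  then have "(\<lambda>j. f ((if j \<in> A then y j else 0) *\<^sub>R S (unitvec j)))
      = (\<lambda>j. if j \<in> A then y j * f (T (unitvec j)) else 0)"
    using linear_scale[OF bounded_linear.linear[OF f]] by (auto simp: fun_eq_iff)
  ultimately show ?thesis by simp
qed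

lemma ell1_mT_of_extension:
  fixes S T :: "(nat \<Rightarrow> real) \<Rightarrow> 'a::real_normed_vector"
  assumes S: "cont_lin_op_on_ell p S" and p: "p > 0" and ext: "\<forall>x\<in>ell 1. S x = T x"
    and y: "y \<in> ell p"
  shows "ell1_mT T y"
  unfolding ell1_mT_def
proof (intro conjI allI impI)
  note sums = extension_restriction_sums[OF S p ext y]
  fix f :: "'a \<Rightarrow> real" assume f: "bounded_linear f"
  define g where "g j = y j * f (T (unitvec j))" for j
  have "summable (\<lambda>j. if j \<in> {j. g j \<ge> 0} then g j else 0)"
    "summable (\<lambda>j. if j \<in> {j. g j < 0} then g j else 0)"
    unfolding g_def by (rule sums_summable[OF sums[OF f]])+
  then have "summable (\<lambda>j. (if j \<in> {j. g j \<ge> 0} then g j else 0) - (if j \<in> {j. g j < 0} then g j else 0))"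
    by (rule summable_diff)
  also have "(\<lambda>j. (if j \<in> {j. g j \<ge> 0} then g j else 0) - (if j \<in> {j. g j < 0} then g j else 0))
      = (\<lambda>j. \<bar>y j\<bar> * \<bar>f (T (unitvec j))\<bar>)"
    by (auto simp: fun_eq_iff g_def abs_mult[symmetric])
  finally show "summable (\<lambda>j. \<bar>y j\<bar> * \<bar>f (T (unitvec j))\<bar>)" .
next
  fix A :: "nat set"
  show "\<exists>v. \<forall>f. bounded_linear f \<longrightarrow> f v = (\<Sum>j. if j \<in> A then y j * f (T (unitvec j)) else 0)"
    using extension_restriction_sums[OF S p ext y] by (blast intro: sums_unique)
qed

lemma ell_1_subset_ellr_mT:
  assumes p: "p \<ge> 1" and ell_p: "ell p \<subseteq> {x. ell1_mT T x}"
  shows "ell 1 \<subseteq> {x. ellr_mT (1 / p) T x} \<inter> {x. ell1_mT T x}"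
proof
  fix x assume x: "x \<in> ell 1"
  then have "ell1_mT T x" using ell_1_subset_ell[OF p] ell_p by auto
  moreover have "(\<lambda>j. \<bar>x j\<bar> powr (1 / p)) \<in> ell p"
    using x p unfolding ell_def by (simp add: powr_powr)
  then have "ell1_mT T (\<lambda>j. \<bar>x j\<bar> powr (1 / p))" using ell_p by auto
  ultimately show "x \<in> {x. ellr_mT (1 / p) T x} \<inter> {x. ell1_mT T x}"
    unfolding ellr_mT_def by simp
qed

lemma summable_of_ell_1_subset_ellr_mT:
  assumes p: "p > 0" and ell_1: "ell 1 \<subseteq> {x. ellr_mT (1 / p) T x}"
    and y: "y \<in> ell p" and f: "bounded_linear f"
  shows "summable (\<lambda>j. \<bar>y j\<bar> * \<bar>f (T (unitvec j))\<bar>)"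
proof -
  have "(\<lambda>j. \<bar>y j\<bar> powr p) \<in> ell 1" using y unfolding ell_def by simp
  then have "ell1_mT T (\<lambda>j. \<bar>\<bar>y j\<bar> powr p\<bar> powr (1 / p))"
    using ell_1 unfolding ellr_mT_def by auto
  moreover have "(\<lambda>j. \<bar>\<bar>y j\<bar> powr p\<bar> powr (1 / p)) = (\<lambda>j. \<bar>y j\<bar>)"
    using p by (simp add: powr_powr)
  ultimately have "ell1_mT T (\<lambda>j. \<bar>y j\<bar>)" by metis
  then show ?thesis using f unfolding ell1_mT_def by simp
qed

section \<open>The gliding hump\<close>

lemma unbounded_nonneg_sums_witness:
  assumes unbounded: "\<not> (\<exists>C>0. nonneg_sums_bounded p C a)" and C: "C > 0"
  obtains F x where "finite F" "\<forall>j\<in>F. x j \<ge> 0" "(\<Sum>j\<in>F. x j powr p) > 0"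
    "C * (\<Sum>j\<in>F. x j powr p) powr (1 / p) < norm (\<Sum>j\<in>F. x j *\<^sub>R a j)"
proof -
  have "\<not> nonneg_sums_bounded p C a" using unbounded C by blast
  then obtain F x where F: "finite F" and x: "\<forall>j\<in>F. x j \<ge> 0"
    and large: "C * (\<Sum>j\<in>F. x j powr p) powr (1 / p) < norm (\<Sum>j\<in>F. x j *\<^sub>R a j)"
    unfolding nonneg_sums_bounded_def by (auto simp: not_le)
  moreover have "(\<Sum>j\<in>F. x j powr p) \<noteq> 0"
  proof
    assume "(\<Sum>j\<in>F. x j powr p) = 0"
    then have "\<forall>j\<in>F. x j = 0" using F by (simp add: sum_nonneg_eq_0_iff)
    then show False using large by simp
  qed
  then have "(\<Sum>j\<in>F. x j powr p) > 0" by (simp add: order_less_le sum_nonneg)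
  ultimately show ?thesis using that by blast
qed

lemma unbounded_nonneg_sums_block:
  assumes unbounded: "\<not> (\<exists>C>0. nonneg_sums_bounded p C a)" and p: "p > 0" and \<epsilon>: "\<epsilon> > 0"
  obtains F x where "finite F" "\<And>j. x j \<ge> 0" "\<And>j. j \<notin> F \<Longrightarrow> x j = 0"
    "(\<Sum>j\<in>F. x j powr p) = \<epsilon>" "M < norm (\<Sum>j\<in>F. x j *\<^sub>R a j)"
proof -
  define C where "C = (\<bar>M\<bar> + 1) / \<epsilon> powr (1 / p)"
  have "C > 0" using \<epsilon> unfolding C_def by simp
  then obtain F x where F: "finite F" and x: "\<forall>j\<in>F. x j \<ge> 0" and s: "(\<Sum>j\<in>F. x j powr p) > 0"
    and large: "C * (\<Sum>j\<in>F. x j powr p) powr (1 / p) < norm (\<Sum>j\<in>F. x j *\<^sub>R a j)"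
    using unbounded_nonneg_sums_witness[OF unbounded] by blast
  define s where "s = (\<Sum>j\<in>F. x j powr p)"
  define c where "c = (\<epsilon> / s) powr (1 / p)"
  have "s > 0" "c > 0" using \<epsilon> s unfolding c_def s_def by simp_all
  define y where "y j = (if j \<in> F then c * x j else 0)" for j
  have "(\<Sum>j\<in>F. y j powr p) = c powr p * s"
    unfolding s_def sum_distrib_left using x \<open>c > 0\<close> by (intro sum.cong) (auto simp: y_def powr_mult)
  also have "\<dots> = \<epsilon>"
    using \<epsilon> \<open>s > 0\<close> p unfolding c_def by (simp add: powr_powr)
  finally have "(\<Sum>j\<in>F. y j powr p) = \<epsilon>" .
  moreover have "M < norm (\<Sum>j\<in>F. y j *\<^sub>R a j)"
  proof -
    have "c * (C * s powr (1 / p)) = \<bar>M\<bar> + 1"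
      using \<epsilon> \<open>s > 0\<close> unfolding c_def C_def by (simp add: powr_divide)
    moreover have "c * (C * s powr (1 / p)) < c * norm (\<Sum>j\<in>F. x j *\<^sub>R a j)"
      using large \<open>c > 0\<close> unfolding s_def by simp
    moreover have "(\<Sum>j\<in>F. y j *\<^sub>R a j) = c *\<^sub>R (\<Sum>j\<in>F. x j *\<^sub>R a j)"
      unfolding scaleR_sum_right by (intro sum.cong) (auto simp: y_def)
    ultimately show ?thesis using \<open>c > 0\<close> by simp
  qed
  moreover have "y j \<ge> 0" "j \<notin> F \<Longrightarrow> y j = 0" for j
    using x \<open>c > 0\<close> by (auto simp: y_def)
  ultimately show ?thesis using that F by blast
qed

lemma ell_majorant:
  fixes z :: "nat \<Rightarrow> nat \<Rightarrow> real"
  assumes p: "p > 0" and nonneg: "\<And>k j. z k j \<ge> 0" and \<epsilon>: "summable \<epsilon>"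
    and small: "\<And>k J. finite J \<Longrightarrow> (\<Sum>j\<in>J. z k j powr p) \<le> \<epsilon> k"
  shows "\<exists>y\<in>ell p. \<forall>k j. z k j \<le> y j"
proof (intro bexI allI)
  define y where "y j = (\<Sum>k. z k j powr p) powr (1 / p)" for j
  have summable: "summable (\<lambda>k. z k j powr p)" for j
    using small[of "{j}"] by (intro summable_comparison_test'[OF \<epsilon>, where N=0]) simp
  have y_powr: "\<bar>y j\<bar> powr p = (\<Sum>k. z k j powr p)" for j
    using p suminf_nonneg[OF summable] by (simp add: y_def powr_powr)
  have "(\<Sum>j\<le>n. \<bar>y j\<bar> powr p) \<le> suminf \<epsilon>" for n
  proof -
    have "(\<Sum>j\<le>n. \<bar>y j\<bar> powr p) = (\<Sum>k. \<Sum>j\<le>n. z k j powr p)"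
      unfolding y_powr by (rule suminf_sum[OF summable, symmetric])
    also have "\<dots> \<le> suminf \<epsilon>"
      by (intro suminf_le small summable_sum summable \<epsilon>) simp
    finally show ?thesis .
  qed
  then show "y \<in> ell p" unfolding ell_def by (auto intro!: bounded_imp_summable)
  fix k j
  show "z k j \<le> y j"
  proof -
    have "z k j = (z k j powr p) powr (1 / p)" using p nonneg[of k j] by (simp add: powr_powr)
    also have "\<dots> \<le> y j"
      unfolding y_def using p sum_le_suminf[OF summable, of "{k}"] by (intro powr_mono2) auto
    finally show ?thesis .
  qed
qed

lemma unbounded_nonneg_sums_blocks:
  assumes unbounded: "\<not> (\<exists>C>0. nonneg_sums_bounded p C a)" and p: "p > 0"
  obtains F x where "\<And>k. finite (F k)" "\<And>k j. x k j \<ge> 0"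
    "\<And>k J. finite J \<Longrightarrow> (\<Sum>j\<in>J. x k j powr p) \<le> (1 / 2) ^ k"
    "\<And>k. real k < norm (\<Sum>j\<in>F k. x k j *\<^sub>R a j)"
proof -
  define block where "block k F x \<longleftrightarrow> finite F \<and> (\<forall>j. x j \<ge> 0) \<and> (\<forall>j. j \<notin> F \<longrightarrow> x j = 0) \<and>
      (\<Sum>j\<in>F. x j powr p) = (1 / 2) ^ k \<and> real k < norm (\<Sum>j\<in>F. x j *\<^sub>R a j)"
    for k F and x :: "nat \<Rightarrow> real"
  have "\<exists>F x. block k F x" for k
    unfolding block_def
    by (rule unbounded_nonneg_sums_block[OF unbounded p, of "(1 / 2) ^ k" "real k"]) (simp, blast)
  then obtain F x where blocks: "block k (F k) (x k)" for k by metis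
  have "finite (F k)" "x k j \<ge> 0" for k j
    using blocks[of k] unfolding block_def by auto
  moreover have "(\<Sum>j\<in>J. x k j powr p) \<le> (1 / 2) ^ k" if "finite J" for k J
  proof -
    have "(\<Sum>j\<in>J. x k j powr p) \<le> (\<Sum>j\<in>J \<union> F k. x k j powr p)"
      using that blocks[of k] unfolding block_def by (intro sum_mono2) auto
    also have "\<dots> = (\<Sum>j\<in>F k. x k j powr p)"
      using that blocks[of k] unfolding block_def by (intro sum.mono_neutral_right) auto
    finally show ?thesis using blocks[of k] unfolding block_def by simp
  qed
  moreover have "real k < norm (\<Sum>j\<in>F k. x k j *\<^sub>R a j)" for k
    using blocks[of k] unfolding block_def by auto
  ultimately show ?thesis by (rule that)
qed

lemma abs_functional_sum_le_suminf:
  fixes a :: "nat \<Rightarrow> 'a::real_normed_vector"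
  assumes f: "bounded_linear f" and F: "finite F" and x: "\<And>j. 0 \<le> x j" "\<And>j. x j \<le> y j"
    and summable: "summable (\<lambda>j. \<bar>y j\<bar> * \<bar>f (a j)\<bar>)"
  shows "\<bar>f (\<Sum>j\<in>F. x j *\<^sub>R a j)\<bar> \<le> (\<Sum>j. \<bar>y j\<bar> * \<bar>f (a j)\<bar>)"
proof -
  have "f (\<Sum>j\<in>F. x j *\<^sub>R a j) = (\<Sum>j\<in>F. x j * f (a j))"
    using bounded_linear.linear[OF f] by (simp add: linear_sum linear_scale)
  then have "\<bar>f (\<Sum>j\<in>F. x j *\<^sub>R a j)\<bar> \<le> (\<Sum>j\<in>F. \<bar>x j * f (a j)\<bar>)"
    by (simp add: sum_abs)
  also have "\<dots> \<le> (\<Sum>j\<in>F. \<bar>y j\<bar> * \<bar>f (a j)\<bar>)"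
  proof (rule sum_mono)
    fix j
    have "\<bar>x j\<bar> \<le> \<bar>y j\<bar>" using x[of j] by simp
    then show "\<bar>x j * f (a j)\<bar> \<le> \<bar>y j\<bar> * \<bar>f (a j)\<bar>"
      unfolding abs_mult by (rule mult_right_mono) simp
  qed
  also have "\<dots> \<le> (\<Sum>j. \<bar>y j\<bar> * \<bar>f (a j)\<bar>)"
    using summable F by (intro sum_le_suminf) auto
  finally show ?thesis .
qed

lemma nonneg_sums_bounded_of_weakly_summable:
  fixes a :: "nat \<Rightarrow> 'a::real_normed_vector"
  assumes p: "p > 0"
    and weakly_summable: "\<And>y f. y \<in> ell p \<Longrightarrow> bounded_linear f \<Longrightarrow>
      summable (\<lambda>j. \<bar>y j\<bar> * \<bar>f (a j)\<bar>)"
  shows "\<exists>C>0. nonneg_sums_bounded p C a"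
proof (rule ccontr)
  assume unbounded: "\<not> ?thesis"
  obtain F x where F: "\<And>k. finite (F k)" and x: "\<And>k j. x k j \<ge> 0"
    and small: "\<And>k J. finite J \<Longrightarrow> (\<Sum>j\<in>J. x k j powr p) \<le> (1 / 2) ^ k"
    and large: "\<And>k. real k < norm (\<Sum>j\<in>F k. x k j *\<^sub>R a j)"
    by (rule unbounded_nonneg_sums_blocks[OF unbounded p]) blast
  have "summable (\<lambda>k. (1 / 2 :: real) ^ k)" by (rule summable_geometric) simp
  then obtain y where y: "y \<in> ell p" and x_le_y: "\<And>k j. x k j \<le> y j"
    using ell_majorant[where \<epsilon> = "\<lambda>k. (1 / 2) ^ k", OF p x _ small] by blast
  have "\<bar>f (\<Sum>j\<in>F k. x k j *\<^sub>R a j)\<bar> \<le> (\<Sum>j. \<bar>y j\<bar> * \<bar>f (a j)\<bar>)"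
    if f: "bounded_linear f" for f :: "'a \<Rightarrow> real" and k
    using f F[of k] x[of k] x_le_y[of k] weakly_summable[OF y f] by (rule abs_functional_sum_le_suminf)
  then have "\<exists>c. \<forall>k. \<bar>f (\<Sum>j\<in>F k. x k j *\<^sub>R a j)\<bar> \<le> c" if "bounded_linear f" for f :: "'a \<Rightarrow> real"
    using that by blast
  then obtain M where "\<And>k. norm (\<Sum>j\<in>F k. x k j *\<^sub>R a j) \<le> M"
    using weakly_bounded_imp_bounded[of "\<lambda>k. \<Sum>j\<in>F k. x k j *\<^sub>R a j"] by blast
  moreover obtain k :: nat where "M < real k" using reals_Archimedean2 by blast
  ultimately show False using large[of k] by (meson less_trans not_less)
qed

theorem proposition7p2:
  fixes T :: "(nat \<Rightarrow> real) \<Rightarrow> 'e::banach" and p :: real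
  assumes T_cont: "cont_lin_op_on_ell 1 T"
    and T_e: "\<And>n. T (unitvec n) \<noteq> 0"
    and p: "p > 1"
  shows "((\<exists>S :: (nat \<Rightarrow> real) \<Rightarrow> 'e. cont_lin_op_on_ell p S \<and> (\<forall>x\<in>ell 1. S x = T x))
            \<longleftrightarrow> ell p \<subseteq> {x. ell1_mT T x})
       \<and> (ell p \<subseteq> {x. ell1_mT T x}
            \<longleftrightarrow> ell 1 \<subseteq> {x. ellr_mT (1 / p) T x} \<inter> {x. ell1_mT T x})
       \<and> (ell 1 \<subseteq> {x. ellr_mT (1 / p) T x} \<inter> {x. ell1_mT T x}
            \<longleftrightarrow> (\<exists>C>0. \<forall>F x. finite F \<longrightarrow> (\<forall>j\<in>F. x j \<ge> 0) \<longrightarrow>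
                  norm (\<Sum>j\<in>F. x j *\<^sub>R T (unitvec j)) \<le> C * (\<Sum>j\<in>F. x j powr p) powr (1 / p)))"
proof -
  let ?ext = "\<exists>S :: (nat \<Rightarrow> real) \<Rightarrow> 'e. cont_lin_op_on_ell p S \<and> (\<forall>x\<in>ell 1. S x = T x)"
  let ?ell_p = "ell p \<subseteq> {x. ell1_mT T x}"
  let ?ell_1 = "ell 1 \<subseteq> {x. ellr_mT (1 / p) T x} \<inter> {x. ell1_mT T x}"
  let ?bounded = "\<exists>C>0. nonneg_sums_bounded p C (\<lambda>j. T (unitvec j))"
  have "?ext \<Longrightarrow> ?ell_p"
    using ell1_mT_of_extension[of p _ T] p by auto
  moreover have "?ell_p \<Longrightarrow> ?ell_1"
    using ell_1_subset_ellr_mT[of p T] p by simp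
  moreover have "?ell_1 \<Longrightarrow> ?bounded"
    using p summable_of_ell_1_subset_ellr_mT[of p T]
    by (intro nonneg_sums_bounded_of_weakly_summable) auto
  moreover have "?bounded \<Longrightarrow> ?ext"
    using p extension_of_nonneg_sums_bounded[OF T_cont, of p] by (auto dest: less_imp_le)
  ultimately show ?thesis unfolding nonneg_sums_bounded_def by blast
qed

end
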